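(* Let $\mathcal X=\{1,\dots,N\}$ with $N\ge 2$, let $0<\alpha<1$ and $0\le\varepsilon\le 1-\frac1N$. Let $p,q$ be probability distributions on $\mathcal X$ with $p(x)>0$ for all $x\in\mathcal X$, and let $y\in\mathcal X$. Put $p_0'=U_{\alpha,0}(p,y)$ and $p_\varepsilon'=U_{\alpha,\varepsilon}(p,y)$. Then \[ D(q\parallel p_0')\;\ge\; D(q\parallel p_\varepsilon')-\log\frac1{1-\varepsilon}. \]
   Context: All logarithms are natural. For a distribution $p$ on $\mathcal X$, a letter $y\in\mathcal X$, $0<\alpha<1$ and $0\le\varepsilon\le 1-\frac1N$, the update $U_{\alpha,\varepsilon}(p,y)$ is the distribution $p'$ with $p'(x)=\alpha p(x)+(1-\alpha)(1-\varepsilon)$ if $x=y$ and $p'(x)=\alpha p(x)+(1-\alpha)\frac{\varepsilon}{N-1}$ if $x\ne y$. For distributions $q,r$ on $\mathcal X$ with $r(x)>0$ for all $x$, the KL divergence is $D(q\parallel r)=\sum_{x:\,q(x)>0} q(x)\log\frac{q(x)}{r(x)}$. *)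

theory Defs
  imports Complex_Main
begin

text \<open>Alphabet X = {1..N}; distributions are functions nat => real restricted to {1..N}.\<close>

definition is_distribution :: "nat \<Rightarrow> (nat \<Rightarrow> real) \<Rightarrow> bool" where
  "is_distribution N p \<longleftrightarrow> (\<forall>x\<in>{1..N}. p x \<ge> 0) \<and> (\<Sum>x\<in>{1..N}. p x) = 1"

definition upd :: "nat \<Rightarrow> real \<Rightarrow> real \<Rightarrow> (nat \<Rightarrow> real) \<Rightarrow> nat \<Rightarrow> (nat \<Rightarrow> real)" where
  "upd N \<alpha> \<epsilon> p y = (\<lambda>x. if x = y then \<alpha> * p x + (1 - \<alpha>) * (1 - \<epsilon>)
                          else \<alpha> * p x + (1 - \<alpha>) * (\<epsilon> / (real N - 1)))"

definition KL :: "nat \<Rightarrow> (nat \<Rightarrow> real) \<Rightarrow> (nat \<Rightarrow> real) \<Rightarrow> real" where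
  "KL N q r = (\<Sum>x\<in>{x\<in>{1..N}. q x > 0}. q x * ln (q x / r x))"

end

theory Submission
  imports Defs
begin

(* Smoothing the update with eps moves at most a fraction eps of the mass away from any letter,
   so pointwise (1 - eps) U_{alpha,0}(p,y) <= U_{alpha,eps}(p,y). Shrinking the reference
   distribution pointwise by a factor c raises the KL divergence by at most log (1/c). *)

lemma sum_support_eq_one:
  assumes "is_distribution N q"
  shows "(\<Sum>x\<in>{x\<in>{1..N}. q x > 0}. q x) = 1"
proof -
  have "(\<Sum>x\<in>{x\<in>{1..N}. q x > 0}. q x) = (\<Sum>x\<in>{1..N}. if q x > 0 then q x else 0)"
    by (rule sum.inter_filter) simp
  also have "\<dots> = (\<Sum>x\<in>{1..N}. q x)"
    using assms unfolding is_distribution_def by (intro sum.cong) force+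
  finally show ?thesis
    using assms unfolding is_distribution_def by simp
qed

lemma KL_ge_KL_add_ln_of_scaled_le:
  assumes q: "is_distribution N q" and c: "c > 0"
    and r_pos: "\<And>x. x \<in> {1..N} \<Longrightarrow> q x > 0 \<Longrightarrow> r x > 0"
    and scaled_le: "\<And>x. x \<in> {1..N} \<Longrightarrow> q x > 0 \<Longrightarrow> c * r x \<le> r' x"
  shows "KL N q r \<ge> KL N q r' + ln c"
proof -
  define S where "S = {x\<in>{1..N}. q x > 0}"
  have pointwise: "q x * ln (q x / r' x) + q x * ln c \<le> q x * ln (q x / r x)"
    if "x \<in> S" for x
  proof -
    have qx: "q x > 0" and rx: "r x > 0" and le: "c * r x \<le> r' x"
      using that r_pos scaled_le unfolding S_def by auto
    have r'x: "r' x > 0"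
      using c rx le by (smt (verit) mult_pos_pos)
    have "ln c + ln (r x) = ln (c * r x)"
      using c rx by (simp add: ln_mult)
    also have "\<dots> \<le> ln (r' x)"
      using c rx le by (simp add: ln_le_cancel_iff r'x)
    finally have "ln c + ln (r x) \<le> ln (r' x)" .
    then have "ln (q x / r' x) + ln c \<le> ln (q x / r x)"
      using qx rx r'x by (simp add: ln_div)
    then show ?thesis
      using qx by (simp add: distrib_left[symmetric])
  qed
  have "KL N q r' + ln c = (\<Sum>x\<in>S. q x * ln (q x / r' x) + q x * ln c)"
    using sum_support_eq_one[OF q]
    by (simp add: KL_def S_def sum.distrib sum_distrib_right[symmetric])
  also have "\<dots> \<le> (\<Sum>x\<in>S. q x * ln (q x / r x))"
    by (rule sum_mono) (rule pointwise)
  also have "\<dots> = KL N q r"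
    by (simp add: KL_def S_def)
  finally show ?thesis .
qed

lemma upd_pos:
  assumes "N \<ge> 1" "0 < \<alpha>" "\<alpha> \<le> 1" "0 \<le> \<epsilon>" "\<epsilon> \<le> 1" "p x > 0"
  shows "upd N \<alpha> \<epsilon> p y x > 0"
proof -
  have "(1 - \<alpha>) * (1 - \<epsilon>) \<ge> 0" "(1 - \<alpha>) * (\<epsilon> / (real N - 1)) \<ge> 0"
    using assms by (auto intro: divide_nonneg_nonneg)
  then show ?thesis
    using assms unfolding upd_def by (auto intro: add_pos_nonneg)
qed

lemma upd_zero_scaled_le_upd:
  assumes "N \<ge> 1" "0 \<le> \<alpha>" "\<alpha> \<le> 1" "0 \<le> \<epsilon>" "p x \<ge> 0"
  shows "(1 - \<epsilon>) * upd N \<alpha> 0 p y x \<le> upd N \<alpha> \<epsilon> p y x"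
proof -
  have "(1 - \<epsilon>) * (\<alpha> * p x) \<le> \<alpha> * p x"
    using assms by (simp add: algebra_simps)
  moreover have "(1 - \<alpha>) * (\<epsilon> / (real N - 1)) \<ge> 0"
    using assms by (auto intro: divide_nonneg_nonneg)
  ultimately show ?thesis
    unfolding upd_def by (cases "x = y") (simp_all add: algebra_simps)
qed

theorem lemma1:
  fixes N :: nat and \<alpha> \<epsilon> :: real and p q :: "nat \<Rightarrow> real" and y :: nat
  assumes "N \<ge> 2"
    and "0 < \<alpha>" and "\<alpha> < 1"
    and "0 \<le> \<epsilon>" and "\<epsilon> \<le> 1 - 1 / real N"
    and "is_distribution N p" and "is_distribution N q"
    and "\<forall>x\<in>{1..N}. p x > 0"
    and "y \<in> {1..N}"
  shows "KL N q (upd N \<alpha> 0 p y) \<ge> KL N q (upd N \<alpha> \<epsilon> p y) - ln (1 / (1 - \<epsilon>))"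
proof -
  have "1 / real N > 0"
    using assms(1) by simp
  then have "\<epsilon> < 1"
    using assms(5) by linarith
  have "KL N q (upd N \<alpha> 0 p y) \<ge> KL N q (upd N \<alpha> \<epsilon> p y) + ln (1 - \<epsilon>)"
  proof (rule KL_ge_KL_add_ln_of_scaled_le[OF assms(7)])
    show "1 - \<epsilon> > 0" using \<open>\<epsilon> < 1\<close> by simp
    show "upd N \<alpha> 0 p y x > 0" if "x \<in> {1..N}" for x
      using assms(1,2,3,8) that by (intro upd_pos) auto
    show "(1 - \<epsilon>) * upd N \<alpha> 0 p y x \<le> upd N \<alpha> \<epsilon> p y x" if "x \<in> {1..N}" for x
      using assms(1,2,3,4,8) that by (intro upd_zero_scaled_le_upd) (auto intro: less_imp_le)
  qed
  moreover have "ln (1 / (1 - \<epsilon>)) = - ln (1 - \<epsilon>)"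
    using \<open>\<epsilon> < 1\<close> by (simp add: ln_div)
  ultimately show ?thesis by linarith
qed

end
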